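(* Let $T$ be a finite abelian group, written multiplicatively, and let $F: T\times T\to \{z\in\mathbb{C}: |z|=1\}$ be a map satisfying, for all $K,K_1,K_2,L,L_1,L_2\in T$, $$F(K_1K_2,L)=F(K_1,L)F(K_2,L),\qquad F(K,L_1L_2)=F(K,L_1)F(K,L_2),\qquad F(K,L)=\overline{F(L,K)}.$$ Let $\mathcal{S}$ be a subgroup of $T$ and let $\mathcal{U}=\{J\in\mathcal{S} : F(K,J)=1 \text{ for all } K\in\mathcal{S}\}$. Suppose $X\in T$ satisfies $F(X,K)=1$ for all $K\in\mathcal{U}$. Then there exists $R\in X\mathcal{S}$ such that $F(R,K)=1$ for all $K\in\mathcal{S}$, and such an element $R$ is unique up to multiplication by elements of $\mathcal{U}$.
   Context: This is the group-theoretic content of the statement that untwisted orbit representatives exist: here $T$ plays the role of the group of simple currents fixing a given primary field $a$, $F(K,L)=F(a,K,L)$ is the simple current twist on $a$, $\mathcal{S}$ is the stabilizer of $a$ in the extension group, $\mathcal{U}$ is the untwisted stabilizer, and $X$ is a representative (fixing $a$) of a coset of the extension group. *)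

theory Defs
  imports Complex_Main "HOL-Algebra.Algebra"
begin

end

theory Submission
  imports Defs
begin

text \<open>For a fixed coset representative \<open>x\<close>, the elements \<open>x \<otimes> s\<close> (\<open>s \<in> S\<close>) give characters
  \<open>K \<mapsto> F (x \<otimes> s) K\<close> of \<open>S\<close>. If none of them were trivial, every character sum over \<open>S\<close>
  would vanish, so the double sum over \<open>s\<close> and \<open>K\<close> would be \<open>0\<close>. Summing over \<open>s\<close> first instead,
  orthogonality kills every \<open>K\<close> outside the radical \<open>U\<close> of \<open>F\<close> on \<open>S\<close>, while each \<open>K \<in> U\<close>
  contributes \<open>F x K \<cdot> |S| = |S|\<close>; the total \<open>|U| \<cdot> |S|\<close> is nonzero. Uniqueness is immediate:
  once \<open>R\<close> is orthogonal to \<open>S\<close>, \<open>R \<otimes> u\<close> is orthogonal to \<open>S\<close> exactly when \<open>u\<close> lies in \<open>U\<close>.\<close>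

lemma (in group) character_sum_eq_0:
  fixes \<chi> :: "'a \<Rightarrow> 'c :: field"
  assumes "subgroup S G"
    and "\<And>a b. a \<in> S \<Longrightarrow> b \<in> S \<Longrightarrow> \<chi> (a \<otimes> b) = \<chi> a * \<chi> b"
    and "K0 \<in> S" "\<chi> K0 \<noteq> 1"
  shows "(\<Sum>K\<in>S. \<chi> K) = 0"
proof -
  have K0: "K0 \<in> carrier G"
    using subgroup.mem_carrier[OF assms(1,3)] .
  have "inj_on (\<lambda>K. K0 \<otimes> K) S"
    using K0 assms(1) l_cancel by (intro inj_onI) (meson subgroup.mem_carrier)
  moreover have "(\<lambda>K. K0 \<otimes> K) ` S = S"
    using coset_join3[OF K0 assms(1,3)] by (simp add: l_coset_def UNION_singleton_eq_range)
  ultimately have "(\<Sum>K\<in>S. \<chi> K) = (\<Sum>K\<in>S. \<chi> (K0 \<otimes> K))"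
    by (metis sum.reindex_cong)
  also have "\<dots> = \<chi> K0 * (\<Sum>K\<in>S. \<chi> K)"
    by (simp add: assms(2,3) sum_distrib_left)
  finally show ?thesis
    using assms(4) by (metis mult_cancel_right1)
qed

locale hermitian_bicharacter = comm_group G for G (structure) +
  fixes F :: "'a \<Rightarrow> 'a \<Rightarrow> complex"
  assumes norm_F: "K \<in> carrier G \<Longrightarrow> L \<in> carrier G \<Longrightarrow> cmod (F K L) = 1"
    and F_mult_left: "K1 \<in> carrier G \<Longrightarrow> K2 \<in> carrier G \<Longrightarrow> L \<in> carrier G \<Longrightarrow>
      F (K1 \<otimes> K2) L = F K1 L * F K2 L"
    and F_mult_right: "K \<in> carrier G \<Longrightarrow> L1 \<in> carrier G \<Longrightarrow> L2 \<in> carrier G \<Longrightarrow>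
      F K (L1 \<otimes> L2) = F K L1 * F K L2"
    and F_swap: "K \<in> carrier G \<Longrightarrow> L \<in> carrier G \<Longrightarrow> F K L = cnj (F L K)"
begin

definition radical :: "'a set \<Rightarrow> 'a set"
  where "radical S = {J \<in> S. \<forall>K \<in> S. F K J = 1}"

lemma F_one_left:
  assumes "L \<in> carrier G"
  shows "F \<one> L = 1"
proof -
  have "F \<one> L = F \<one> L * F \<one> L"
    using F_mult_left[of \<one> \<one> L] assms by simp
  moreover have "F \<one> L \<noteq> 0"
    using norm_F[of \<one> L] assms by auto
  ultimately show ?thesis
    by simp
qed

lemma radical_subset: "radical S \<subseteq> S"
  by (auto simp: radical_def)

lemma F_one_right:
  assumes "K \<in> carrier G"
  shows "F K \<one> = 1"
  using F_swap[of K \<one>] F_one_left[of K] assms by simp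

lemma one_in_radical:
  assumes "subgroup S G"
  shows "\<one> \<in> radical S"
  using assms by (auto simp: radical_def F_one_right subgroup.one_closed subgroup.mem_carrier)

lemma mem_radical_iff_left:
  assumes "subgroup S G" "J \<in> S"
  shows "J \<in> radical S \<longleftrightarrow> (\<forall>K \<in> S. F J K = 1)"
proof -
  have "F K J = 1 \<longleftrightarrow> F J K = 1" if "K \<in> S" for K
    using F_swap[of J K] that assms by (simp add: subgroup.mem_carrier)
  then show ?thesis
    using assms(2) by (auto simp: radical_def)
qed

lemma sum_F_left:
  assumes "subgroup S G" "K \<in> S"
  shows "(\<Sum>s\<in>S. F s K) = (if K \<in> radical S then of_nat (card S) else 0)"
proof (cases "K \<in> radical S")
  case True
  then show ?thesis
    by (simp add: radical_def)
next
  case False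
  then obtain s0 where "s0 \<in> S" "F s0 K \<noteq> 1"
    using assms(2) by (auto simp: radical_def)
  with assms have "(\<Sum>s\<in>S. F s K) = 0"
    by (intro character_sum_eq_0[of S]) (auto simp: F_mult_left subgroup.mem_carrier)
  with False show ?thesis
    by simp
qed

lemma orthogonal_element_in_coset:
  assumes "subgroup S G" "finite S" "x \<in> carrier G"
    and "\<forall>K \<in> radical S. F x K = 1"
  shows "\<exists>s \<in> S. \<forall>K \<in> S. F (x \<otimes> s) K = 1"
proof (rule ccontr)
  assume none: "\<not> ?thesis"
  have S_carrier: "y \<in> carrier G" if "y \<in> S" for y
    using assms(1) that by (rule subgroup.mem_carrier)
  have "(\<Sum>K\<in>S. F (x \<otimes> s) K) = 0" if "s \<in> S" for s
  proof -
    obtain K0 where "K0 \<in> S" "F (x \<otimes> s) K0 \<noteq> 1"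
      using none \<open>s \<in> S\<close> by blast
    with assms(1,3) \<open>s \<in> S\<close> show ?thesis
      by (intro character_sum_eq_0[of S]) (auto simp: F_mult_right S_carrier)
  qed
  then have "0 = (\<Sum>s\<in>S. \<Sum>K\<in>S. F (x \<otimes> s) K)"
    by simp
  also have "\<dots> = (\<Sum>K\<in>S. F x K * (\<Sum>s\<in>S. F s K))"
    using assms(3) by (subst sum.swap) (simp add: F_mult_left S_carrier sum_distrib_left)
  also have "\<dots> = (\<Sum>K\<in>S. if K \<in> radical S then of_nat (card S) else 0)"
    using assms(1,4) by (intro sum.cong) (simp_all add: sum_F_left)
  also have "\<dots> = of_nat (card (radical S) * card S)"
    using assms(2) radical_subset[of S] by (simp add: sum.If_cases Int_absorb1)
  finally have "card (radical S) * card S = 0"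
    by (metis of_nat_eq_0_iff)
  moreover have "finite (radical S)"
    using finite_subset[OF radical_subset assms(2)] .
  ultimately show False
    using assms(2) one_in_radical[OF assms(1)] subgroup.one_closed[OF assms(1)]
    by (metis card_0_eq empty_iff mult_is_0)
qed

lemma orthogonal_in_coset_iff:
  assumes "subgroup S G" "R \<in> carrier G" "\<forall>K \<in> S. F R K = 1"
  shows "R' \<in> R <# S \<and> (\<forall>K \<in> S. F R' K = 1) \<longleftrightarrow> R' \<in> R <# radical S"
proof -
  have "F (R \<otimes> u) K = F u K" if "u \<in> S" "K \<in> S" for u K
    using assms that by (simp add: F_mult_left subgroup.mem_carrier)
  then have orthogonal_iff: "(\<forall>K \<in> S. F (R \<otimes> u) K = 1) \<longleftrightarrow> u \<in> radical S" if "u \<in> S" for u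
    using mem_radical_iff_left[OF assms(1) that] that by simp
  show ?thesis
    unfolding l_coset_def UNION_singleton_eq_range image_iff using orthogonal_iff radical_subset by blast
qed

end

theorem mainTheorem1:
  fixes G (structure)
    and F :: "'a \<Rightarrow> 'a \<Rightarrow> complex"
    and S U :: "'a set" and X0 :: "'a"
  assumes "comm_group G"
    and "finite (carrier G)"
    and "\<And>K L. K \<in> carrier G \<Longrightarrow> L \<in> carrier G \<Longrightarrow> cmod (F K L) = 1"
    and "\<And>K1 K2 L. K1 \<in> carrier G \<Longrightarrow> K2 \<in> carrier G \<Longrightarrow> L \<in> carrier G \<Longrightarrow>
           F (K1 \<otimes>\<^bsub>G\<^esub> K2) L = F K1 L * F K2 L"
    and "\<And>K L1 L2. K \<in> carrier G \<Longrightarrow> L1 \<in> carrier G \<Longrightarrow> L2 \<in> carrier G \<Longrightarrow>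
           F K (L1 \<otimes>\<^bsub>G\<^esub> L2) = F K L1 * F K L2"
    and "\<And>K L. K \<in> carrier G \<Longrightarrow> L \<in> carrier G \<Longrightarrow> F K L = cnj (F L K)"
    and "subgroup S G"
    and "U = {J \<in> S. \<forall>K \<in> S. F K J = 1}"
    and "X0 \<in> carrier G"
    and "\<forall>K \<in> U. F X0 K = 1"
  shows "\<exists>R. R \<in> l_coset G X0 S \<and> (\<forall>K \<in> S. F R K = 1) \<and>
           (\<forall>R'. (R' \<in> l_coset G X0 S \<and> (\<forall>K \<in> S. F R' K = 1)) \<longleftrightarrow> R' \<in> l_coset G R U)"
proof -
  interpret hermitian_bicharacter G F
    by (intro hermitian_bicharacter.intro hermitian_bicharacter_axioms.intro assms(1)) (fact assms)+
  have U: "U = radical S"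
    using assms(8) by (simp add: radical_def)
  have "finite S"
    using finite_subset[OF subgroup.subset[OF assms(7)] assms(2)] .
  moreover have "\<forall>K \<in> radical S. F X0 K = 1"
    using assms(10) U by simp
  ultimately obtain s where s: "s \<in> S" "\<forall>K \<in> S. F (X0 \<otimes> s) K = 1"
    using orthogonal_element_in_coset[OF assms(7) _ assms(9)] by blast
  define R where "R = X0 \<otimes> s"
  have R: "R \<in> carrier G"
    using assms(7,9) s(1) by (simp add: R_def subgroup.mem_carrier)
  have R_orthogonal: "\<forall>K \<in> S. F R K = 1"
    using s(2) by (simp add: R_def)
  have "R \<in> X0 <# S"
    using s(1) by (auto simp: R_def l_coset_def)
  moreover have "X0 <# S = R <# S"
    using l_repr_independence[OF \<open>R \<in> X0 <# S\<close> assms(9,7)] .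
  ultimately show ?thesis
    using R_orthogonal orthogonal_in_coset_iff[OF assms(7) R R_orthogonal] unfolding U by blast
qed

end
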